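(* Let $\Sigma$ be an alphabet with $|\Sigma|=2$. For every antimorphic involution $\theta$ on $\Sigma^*$, there is no infinite word over $\Sigma$ that is pseudo-cube-free with respect to $\theta$.
   Context: A function $\theta:\Sigma^*\to\Sigma^*$ is an antimorphic involution if $\theta(uv)=\theta(v)\theta(u)$ and $\theta(\theta(w))=w$. A pseudo cube with respect to $\theta$ is a nonempty word $u_1u_2u_3$ such that for all $1\le i,j\le 3$, $u_i=u_j$ or $u_i=\theta(u_j)$. A word is pseudo-cube-free with respect to $\theta$ if no factor (contiguous subword) of it is a pseudo cube. *)

theory Defs
  imports Main "HOL-Library.Cardinality"
begin

definition antimorphic_involution :: "('a list \<Rightarrow> 'a list) \<Rightarrow> bool" where
  "antimorphic_involution \<theta> \<longleftrightarrow>
     (\<forall>u v. \<theta> (u @ v) = \<theta> v @ \<theta> u) \<and> (\<forall>w. \<theta> (\<theta> w) = w)"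

definition pseudo_cube :: "('a list \<Rightarrow> 'a list) \<Rightarrow> 'a list \<Rightarrow> bool" where
  "pseudo_cube \<theta> x \<longleftrightarrow> x \<noteq> [] \<and>
     (\<exists>u1 u2 u3. x = u1 @ u2 @ u3 \<and>
        (\<forall>i<3. \<forall>j<3. [u1,u2,u3] ! i = [u1,u2,u3] ! j \<or> [u1,u2,u3] ! i = \<theta> ([u1,u2,u3] ! j)))"

definition inf_factor :: "'a list \<Rightarrow> (nat \<Rightarrow> 'a) \<Rightarrow> bool" where
  "inf_factor x w \<longleftrightarrow> (\<exists>i j. i \<le> j \<and> x = map w [i..<j])"

definition inf_pseudo_cube_free :: "('a list \<Rightarrow> 'a list) \<Rightarrow> (nat \<Rightarrow> 'a) \<Rightarrow> bool" where
  "inf_pseudo_cube_free \<theta> w \<longleftrightarrow> (\<forall>x. inf_factor x w \<longrightarrow> \<not> pseudo_cube \<theta> x)"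

end

theory Submission
  imports Defs
begin

text \<open>An antimorphic involution is reversal composed with an involution of the letters. If that
  letter involution has no fixed point, then on a binary alphabet every letter is either \<open>w 0\<close>
  or its image, so the first three letters of \<open>w\<close> already form a pseudo cube. Otherwise it is
  the identity on both letters, \<open>\<theta>\<close> is plain reversal, and an exhaustive check shows that every
  binary word of length 10 contains a factor \<open>u v z\<close> with \<open>v, z \<in> {u, rev u}\<close>.\<close>

lemma antimorphic_involution_involutive:
  "antimorphic_involution \<theta> \<Longrightarrow> \<theta> (\<theta> v) = v"
  unfolding antimorphic_involution_def by blast

lemma antimorphic_involution_append:
  "antimorphic_involution \<theta> \<Longrightarrow> \<theta> (u @ v) = \<theta> v @ \<theta> u"
  unfolding antimorphic_involution_def by blast

lemma antimorphic_involution_Nil: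
  assumes "antimorphic_involution \<theta>"
  shows "\<theta> [] = []"
proof -
  have "\<theta> [] = \<theta> [] @ \<theta> []"
    using antimorphic_involution_append[OF assms, of "[]" "[]"] by simp
  then show ?thesis by simp
qed

lemma length_le_antimorphic_involution:
  assumes "antimorphic_involution \<theta>"
  shows "length v \<le> length (\<theta> v)"
proof (induction v)
  case Nil
  then show ?case by simp
next
  case (Cons c v)
  have "0 < length (\<theta> [c])"
    using antimorphic_involution_involutive[OF assms, of "[c]"] antimorphic_involution_Nil[OF assms]
    by (cases "\<theta> [c]") auto
  moreover have "length (\<theta> (c # v)) = length (\<theta> v) + length (\<theta> [c])"
    using antimorphic_involution_append[OF assms, of "[c]" v] by simp
  ultimately show ?case using Cons.IH unfolding length_Cons by linarith
qed

lemma antimorphic_involution_singleton: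
  assumes "antimorphic_involution \<theta>"
  shows "\<theta> [c] = [hd (\<theta> [c])]"
proof -
  have "length (\<theta> [c]) \<le> 1"
    using length_le_antimorphic_involution[OF assms, of "\<theta> [c]"]
      antimorphic_involution_involutive[OF assms, of "[c]"] by simp
  moreover have "length [c] \<le> length (\<theta> [c])"
    by (rule length_le_antimorphic_involution[OF assms])
  ultimately show ?thesis by (cases "\<theta> [c]") auto
qed

lemma antimorphic_involution_letterwise:
  assumes "antimorphic_involution \<theta>"
  obtains f where "\<And>c. f (f c) = c" and "\<theta> = (\<lambda>v. rev (map f v))"
proof
  define f where "f c = hd (\<theta> [c])" for c
  have rev_map: "\<theta> v = rev (map f v)" for v
  proof (induction v)
    case Nil
    then show ?case by (simp add: antimorphic_involution_Nil[OF assms])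
  next
    case (Cons c v)
    then show ?case
      using antimorphic_involution_append[OF assms, of "[c]" v]
        antimorphic_involution_singleton[OF assms, of c]
      by (simp add: f_def)
  qed
  show "f (f c) = c" for c
    using antimorphic_involution_involutive[OF assms, of "[c]"] by (simp add: rev_map)
  show "\<theta> = (\<lambda>v. rev (map f v))"
    using rev_map by (rule ext)
qed

lemma pseudo_cube_appendI:
  assumes "\<And>v. \<theta> (\<theta> v) = v" and "u \<noteq> []"
    and "v \<in> {u, \<theta> u}" and "z \<in> {u, \<theta> u}"
  shows "pseudo_cube \<theta> (u @ v @ z)"
proof -
  have related: "p = q \<or> p = \<theta> q" if "p \<in> {u, \<theta> u}" and "q \<in> {u, \<theta> u}" for p q
    using that assms(1) by auto
  have "[u, v, z] ! i \<in> {u, \<theta> u}" if "i < 3" for i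
    using that assms(3,4) by (auto simp: numeral_3_eq_3 less_Suc_eq)
  then have "\<forall>i<3. \<forall>j<3. [u, v, z] ! i = [u, v, z] ! j \<or> [u, v, z] ! i = \<theta> ([u, v, z] ! j)"
    using related by blast
  then show ?thesis
    unfolding pseudo_cube_def using assms(2) by blast
qed

definition block :: "(nat \<Rightarrow> 'a) \<Rightarrow> nat \<Rightarrow> nat \<Rightarrow> 'a list" where
  "block w i k = map w [i..<i + k]"

definition pseudo_cube_at :: "('a list \<Rightarrow> 'a list) \<Rightarrow> (nat \<Rightarrow> 'a) \<Rightarrow> nat \<Rightarrow> nat \<Rightarrow> bool" where
  "pseudo_cube_at \<theta> w i k \<longleftrightarrow> 0 < k \<and>
     block w (i + k) k \<in> {block w i k, \<theta> (block w i k)} \<and>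
     block w (i + 2 * k) k \<in> {block w i k, \<theta> (block w i k)}"

lemma map_upt_eq_blocks:
  "map w [i..<i + 3 * k] = block w i k @ block w (i + k) k @ block w (i + 2 * k) k"
proof -
  have "[i..<i + 3 * k] = [i..<i + k] @ [i + k..<i + 2 * k] @ [i + 2 * k..<i + 2 * k + k]"
    using upt_add_eq_append[of i "i + k" "2 * k"] upt_add_eq_append[of "i + k" "i + 2 * k" k]
    by (simp add: algebra_simps)
  then show ?thesis by (simp add: block_def mult_2 add.assoc)
qed

lemma pseudo_cube_at_not_inf_pseudo_cube_free:
  assumes "\<And>v. \<theta> (\<theta> v) = v" and "pseudo_cube_at \<theta> w i k"
  shows "\<not> inf_pseudo_cube_free \<theta> w"
proof -
  have "pseudo_cube \<theta> (map w [i..<i + 3 * k])"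
    using assms unfolding map_upt_eq_blocks pseudo_cube_at_def
    by (intro pseudo_cube_appendI) (auto simp: block_def)
  moreover have "inf_factor (map w [i..<i + 3 * k]) w"
    unfolding inf_factor_def by (intro exI[of _ i] exI[of _ "i + 3 * k"]) simp
  ultimately show ?thesis
    unfolding inf_pseudo_cube_free_def by blast
qed

text \<open>After unfolding, this is a propositional tautology in \<open>x 0, \<dots>, x 9\<close>. The length 10 is
  optimal: \<open>aabbabbaa\<close> contains no such factor.\<close>

lemma pseudo_cube_at_rev_bool:
  fixes x :: "nat \<Rightarrow> bool"
  shows "\<exists>k \<in> {1, 2, 3}. \<exists>i \<in> {..10 - 3 * k}. pseudo_cube_at rev x i k"
  unfolding pseudo_cube_at_def
  by (simp add: block_def atMost_Suc numeral_eq_Suc) sat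

lemma pseudo_cube_at_rev_comp:
  assumes "pseudo_cube_at rev x i k"
  shows "pseudo_cube_at rev (h \<circ> x) i k"
proof -
  have "block (h \<circ> x) j k = map h (block x j k)" for j
    by (simp add: block_def)
  then show ?thesis
    using assms unfolding pseudo_cube_at_def by (auto simp: rev_map)
qed

lemma pseudo_cube_at_rev_two_letters:
  assumes "range w \<subseteq> {a, b}"
  obtains i k where "pseudo_cube_at rev w i k"
proof -
  define x where "x n = (w n = a)" for n
  have "w = (\<lambda>c. if c then a else b) \<circ> x"
    using assms by (auto simp: x_def fun_eq_iff)
  then show ?thesis
    using pseudo_cube_at_rev_bool[of x] pseudo_cube_at_rev_comp that by metis
qed

lemma involution_on_two_letters:
  fixes a b :: 'a and f :: "'a \<Rightarrow> 'a"
  assumes "UNIV = {a, b}" and "\<And>c. f (f c) = c"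
  shows "f = id \<or> (\<forall>c. f c \<noteq> c)"
proof -
  have letter: "c = a \<or> c = b" for c
    using assms(1) by blast
  show ?thesis
  proof (cases "f a = a")
    case True
    then have "f b = b"
      using assms(2)[of b] letter[of "f b"] by auto
    with True have "f c = c" for c
      using letter[of c] by auto
    then show ?thesis
      by auto
  next
    case False
    then have "f a = b"
      using letter[of "f a"] by auto
    moreover have "f b = a"
      using assms(2)[of a] \<open>f a = b\<close> by simp
    ultimately have "f c \<noteq> c" for c
      using letter[of c] False by auto
    then show ?thesis
      by blast
  qed
qed

lemma pseudo_cube_at_fixpoint_free_two_letters:
  fixes a b :: 'a and f :: "'a \<Rightarrow> 'a"
  assumes "UNIV = {a, b}" and "\<And>c. f c \<noteq> c"
  shows "pseudo_cube_at (\<lambda>v. rev (map f v)) w 0 1"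
proof -
  have letter: "c = a \<or> c = b" for c
    using assms(1) by blast
  have "f a = b" and "f b = a"
    using letter[of "f a"] letter[of "f b"] assms(2)[of a] assms(2)[of b] by auto
  then have "w n \<in> {w 0, f (w 0)}" for n
    using letter[of "w n"] letter[of "w 0"] by auto
  then show ?thesis
    unfolding pseudo_cube_at_def block_def by simp
qed

theorem mainTheorem10:
  fixes \<theta> :: "'a list \<Rightarrow> 'a list"
  assumes "CARD('a) = 2"
    and "antimorphic_involution \<theta>"
  shows "\<not> (\<exists>w :: nat \<Rightarrow> 'a. inf_pseudo_cube_free \<theta> w)"
proof
  assume "\<exists>w :: nat \<Rightarrow> 'a. inf_pseudo_cube_free \<theta> w"
  then obtain w :: "nat \<Rightarrow> 'a" where free: "inf_pseudo_cube_free \<theta> w" ..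
  obtain f where f: "\<And>c. f (f c) = c" and \<theta>: "\<theta> = (\<lambda>v. rev (map f v))"
    using antimorphic_involution_letterwise[OF assms(2)] by blast
  obtain a b :: 'a where UNIV: "UNIV = {a, b}"
    using assms(1) card_2_iff unfolding card_UNIV_def by metis
  have "\<exists>i k. pseudo_cube_at \<theta> w i k"
    using involution_on_two_letters[OF UNIV f]
  proof
    assume "f = id"
    then have "\<theta> = rev"
      using \<theta> by simp
    moreover obtain i k where "pseudo_cube_at rev w i k"
      using pseudo_cube_at_rev_two_letters[of w a b] UNIV by blast
    ultimately show ?thesis
      by blast
  next
    assume "\<forall>c. f c \<noteq> c"
    then show ?thesis
      using pseudo_cube_at_fixpoint_free_two_letters[OF UNIV] \<theta> by blast
  qed
  then show False
    using pseudo_cube_at_not_inf_pseudo_cube_free antimorphic_involution_involutive[OF assms(2)] free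
    by blast
qed

end
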